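(* Let $S$ be a numerical semigroup with minimal generators $e<a_1<\dots<a_t$. Then ${\rm d}_{\max}(S)=\max_{0\le i<e,\ u\in{\rm adj}(S_i)}|\mathcal R(u)|$.
   Context: A numerical semigroup is a submonoid of $(\mathbb N,+)$ with finite complement in $\mathbb N$, with minimal generators $e<a_1<\dots<a_t$. An $S$-factorization of $n\in S$ is a tuple $(c_0,\dots,c_t)\in\mathbb N^{t+1}$ with $c_0e+\sum c_ia_i=n$; its length is $\sum c_i$. ${\rm ord}(n;S)$ is the maximum length of an $S$-factorization of $n$, and ${\rm d}_{\max}(n;S)$ is the number of $S$-factorizations of $n$ of length ${\rm ord}(n;S)$. We set ${\rm d}_{\max}(S)=\max_{n\in S}{\rm d}_{\max}(n;S)$. Let $d_i=a_i-e$, $B=\langle e,d_1,\dots,d_t\rangle$ (the blowup) and $\mathcal D=(e,d_1,\dots,d_t)$. A $B^{\mathcal D}$-factorization of $b\in B$ is a tuple $(x_0,\dots,x_t)\in\mathbb N^{t+1}$ with $x_0e+\sum x_id_i=b$, with length $\sum x_i$. $\min{\rm ord}(b;B^{\mathcal D})$ is the minimum length of such a factorization, and $\mathcal P(b)$ is the set of all of them. For $s\in S$ put ${\rm adj}(s)=s-{\rm ord}(s;S)e$, and $S_i=\{s\in S:s\equiv i\pmod e\}$. For fixed $i$ write ${\rm adj}(S_i)=\{{\rm adj}(s):s\in S_i\}=\{u_0<u_1<\cdots\}$. Define $\mathcal R(u_0)=\mathcal P(u_0)$ and, for $j>0$, $\mathcal R(u_j)=\{\mathbf x\in\mathcal P(u_j):|\mathbf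 x|<\min{\rm ord}(u_{j-1};B^{\mathcal D})-\frac{u_j-u_{j-1}}{e}\}$. *)

theory Defs
  imports Main "HOL-Library.Extended_Nat"
begin

text \<open>Generators are given as g 0 = e < g 1 = a_1 < ... < g t = a_t.
 Tuples in N^(t+1) are functions nat => nat vanishing above t.\<close>

definition numerical_semigroup :: "nat set \<Rightarrow> bool" where
  "numerical_semigroup S \<longleftrightarrow> 0 \<in> S \<and> (\<forall>x\<in>S. \<forall>y\<in>S. x + y \<in> S) \<and> finite (UNIV - S)"

definition tuples :: "nat \<Rightarrow> (nat \<Rightarrow> nat) set" where
  "tuples t = {c. \<forall>i>t. c i = 0}"

definition tlen :: "nat \<Rightarrow> (nat \<Rightarrow> nat) \<Rightarrow> nat" where
  "tlen t c = (\<Sum>i\<le>t. c i)"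

definition minimal_generators :: "nat set \<Rightarrow> (nat \<Rightarrow> nat) \<Rightarrow> nat \<Rightarrow> bool" where
  "minimal_generators S g t \<longleftrightarrow>
     strict_mono_on {..t} g \<and>
     S = {n. \<exists>c. n = (\<Sum>i\<le>t. c i * g i)} \<and>
     (\<forall>j\<le>t. g j \<notin> {n. \<exists>c. n = (\<Sum>i\<in>{..t} - {j}. c i * g i)})"

definition sfact :: "(nat \<Rightarrow> nat) \<Rightarrow> nat \<Rightarrow> nat \<Rightarrow> (nat \<Rightarrow> nat) set" where
  "sfact g t n = {c \<in> tuples t. (\<Sum>i\<le>t. c i * g i) = n}"

definition ord :: "(nat \<Rightarrow> nat) \<Rightarrow> nat \<Rightarrow> nat \<Rightarrow> nat" where
  "ord g t n = Max (tlen t ` sfact g t n)"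

definition dmax :: "(nat \<Rightarrow> nat) \<Rightarrow> nat \<Rightarrow> nat \<Rightarrow> nat" where
  "dmax g t n = card {c \<in> sfact g t n. tlen t c = ord g t n}"

definition dmaxS :: "nat set \<Rightarrow> (nat \<Rightarrow> nat) \<Rightarrow> nat \<Rightarrow> nat" where
  "dmaxS S g t = Max (dmax g t ` S)"

definition blowD :: "(nat \<Rightarrow> nat) \<Rightarrow> nat \<Rightarrow> nat" where
  "blowD g i = (if i = 0 then g 0 else g i - g 0)"

definition Pset :: "(nat \<Rightarrow> nat) \<Rightarrow> nat \<Rightarrow> nat \<Rightarrow> (nat \<Rightarrow> nat) set" where
  "Pset g t b = {x \<in> tuples t. (\<Sum>i\<le>t. x i * blowD g i) = b}"

definition minord :: "(nat \<Rightarrow> nat) \<Rightarrow> nat \<Rightarrow> nat \<Rightarrow> nat" where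
  "minord g t b = Min (tlen t ` Pset g t b)"

definition adj :: "(nat \<Rightarrow> nat) \<Rightarrow> nat \<Rightarrow> nat \<Rightarrow> nat" where
  "adj g t s = s - ord g t s * g 0"

definition Sres :: "nat set \<Rightarrow> (nat \<Rightarrow> nat) \<Rightarrow> nat \<Rightarrow> nat set" where
  "Sres S g i = {s \<in> S. s mod g 0 = i}"

definition Rset :: "nat set \<Rightarrow> (nat \<Rightarrow> nat) \<Rightarrow> nat \<Rightarrow> nat \<Rightarrow> nat \<Rightarrow> (nat \<Rightarrow> nat) set" where
  "Rset S g t i u =
     (let A = adj g t ` Sres S g i in
      if u = Min A then Pset g t u
      else (let v = Max {w \<in> A. w < u} in
        {x \<in> Pset g t u. real (tlen t x) < real (minord g t v) - (real u - real v) / real (g 0)}))"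

end

theory Submission
  imports Defs "HOL-Library.FuncSet"
begin

text \<open>Write e = g 0 and d_i = g i - e. An S-factorization c of n has value
  |c| e + tail_weight c, where tail_weight c is the sum of the c_i d_i over i \<ge> 1, so a
  factorization of maximal length L = ord n has tail weight adj n. Forgetting its
  e-coordinate identifies the maximal factorizations of n with the blowup factorizations of
  adj n of length at most L: a longer one, or one using e, could be padded with copies of e
  into an S-factorization of n longer than L. Within a residue class modulo e, adj is
  antitone in n. For u_j with j > 0 let n be the last element of the class with adj n = u_j,
  so that adj (n + e) = u_{j-1}; the bound defining R(u_j) then forces length at most ord n.
  Conversely, by the same padding argument applied to a shortest blowup factorization of
  u_{j-1}, every short blowup factorization of adj s satisfies the bound defining R(adj s).\<close>

definition tail_weight :: "(nat \<Rightarrow> nat) \<Rightarrow> nat \<Rightarrow> (nat \<Rightarrow> nat) \<Rightarrow> nat" where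
  "tail_weight g t c = (\<Sum>i\<in>{1..t}. c i * blowD g i)"

definition tail_len :: "nat \<Rightarrow> (nat \<Rightarrow> nat) \<Rightarrow> nat" where
  "tail_len t c = (\<Sum>i\<in>{1..t}. c i)"

lemma atMost_eq_insert_0: "{..t::nat} = insert 0 {1..t}"
  by auto

lemma tlen_eq: "tlen t c = c 0 + tail_len t c"
  unfolding tlen_def tail_len_def by (simp add: atMost_eq_insert_0)

lemma tail_weight_upd_0 [simp]: "tail_weight g t (c(0 := a)) = tail_weight g t c"
  unfolding tail_weight_def by (rule sum.cong) auto

lemma tail_len_upd_0 [simp]: "tail_len t (c(0 := a)) = tail_len t c"
  unfolding tail_len_def by (rule sum.cong) auto

lemma tuples_upd_0 [simp]: "c \<in> tuples t \<Longrightarrow> c(0 := a) \<in> tuples t"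
  unfolding tuples_def by auto

lemma sum_blowD_eq: "(\<Sum>i\<le>t. x i * blowD g i) = x 0 * g 0 + tail_weight g t x"
  by (simp add: atMost_eq_insert_0 tail_weight_def blowD_def)

lemma tlen_le_weighted_sum:
  assumes "\<And>i. i \<le> t \<Longrightarrow> 1 \<le> w i"
  shows "tlen t c \<le> (\<Sum>i\<le>t. c i * w i)"
  unfolding tlen_def
proof (rule sum_mono)
  fix i assume "i \<in> {..t}"
  then have "1 \<le> w i" by (intro assms) simp
  then show "c i \<le> c i * w i" by simp
qed

lemma finite_weighted_tuples:
  assumes "\<And>i. i \<le> t \<Longrightarrow> 1 \<le> w i"
  shows "finite {c \<in> tuples t. (\<Sum>i\<le>t. c i * w i) = n}"
proof (rule inj_on_finite)
  let ?C = "{c \<in> tuples t. (\<Sum>i\<le>t. c i * w i) = n}"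
  show "inj_on (\<lambda>c. restrict c {..t}) ?C"
  proof (rule inj_onI)
    fix c c' assume c: "c \<in> ?C" "c' \<in> ?C" and restr: "restrict c {..t} = restrict c' {..t}"
    have "c i = c' i" for i
    proof (cases "i \<le> t")
      case True
      then show ?thesis using fun_cong[OF restr, of i] by simp
    next
      case False
      then show ?thesis using c by (simp add: tuples_def)
    qed
    then show "c = c'" by blast
  qed
  have "c i \<le> n" if "c \<in> ?C" "i \<le> t" for c i
  proof -
    have "c i \<le> tlen t c"
      unfolding tlen_def by (rule member_le_sum) (use that in auto)
    also have "\<dots> \<le> n"
      using tlen_le_weighted_sum[of t w c, OF assms] that by simp
    finally show ?thesis .
  qed
  then show "(\<lambda>c. restrict c {..t}) ` ?C \<subseteq> PiE {..t} (\<lambda>_. {..n})"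
    by (intro image_subsetI) (simp add: Pi_iff)
qed (rule finite_PiE; simp)

lemma Max_eq_Max_if_cofinal:
  fixes X Y :: "nat set"
  assumes "finite Y" "X \<noteq> {}" "Y \<noteq> {}"
    and "\<And>x. x \<in> X \<Longrightarrow> \<exists>y\<in>Y. x \<le> y" and "\<And>y. y \<in> Y \<Longrightarrow> \<exists>x\<in>X. y \<le> x"
  shows "Max X = Max Y"
proof -
  have X_le: "x \<le> Max Y" if "x \<in> X" for x
    using assms(4)[OF that] Max_ge[OF assms(1)] order_trans by blast
  then have "finite X"
    by (meson finite_nat_set_iff_bounded_le)
  have Y_le: "y \<le> Max X" if "y \<in> Y" for y
    using assms(5)[OF that] Max_ge[OF \<open>finite X\<close>] order_trans by blast
  show ?thesis
    using X_le Y_le assms(1-3) \<open>finite X\<close> by (intro antisym) (simp_all add: Max_le_iff)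
qed

lemma Max_less_in:
  fixes A :: "'a::linorder set"
  assumes "finite A" "u \<in> A" "u \<noteq> Min A"
  shows "Max {w \<in> A. w < u} \<in> A" and "Max {w \<in> A. w < u} < u"
proof -
  have "Min A < u"
    using assms Min_le[of A u] by (simp add: order_le_neq_trans)
  then have "{w \<in> A. w < u} \<noteq> {}"
    using Min_in[OF assms(1)] assms(2) by blast
  then have "Max {w \<in> A. w < u} \<in> {w \<in> A. w < u}"
    using assms(1) by (intro Max_in) auto
  then show "Max {w \<in> A. w < u} \<in> A" "Max {w \<in> A. w < u} < u"
    by auto
qed

definition short_Pset :: "(nat \<Rightarrow> nat) \<Rightarrow> nat \<Rightarrow> nat \<Rightarrow> (nat \<Rightarrow> nat) set" where
  "short_Pset g t n = {x \<in> Pset g t (adj g t n). tlen t x \<le> ord g t n}"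

locale multiplicity_generated =
  fixes S :: "nat set" and g :: "nat \<Rightarrow> nat" and t :: nat
  assumes multiplicity_pos: "0 < g 0"
    and multiplicity_less: "\<And>i. 1 \<le> i \<Longrightarrow> i \<le> t \<Longrightarrow> g 0 < g i"
    and S_eq: "S = {n. \<exists>c. n = (\<Sum>i\<le>t. c i * g i)}"
begin

lemma sum_g_eq: "(\<Sum>i\<le>t. c i * g i) = tlen t c * g 0 + tail_weight g t c"
proof -
  have "(\<Sum>i\<in>{1..t}. c i * g i) = (\<Sum>i\<in>{1..t}. c i * blowD g i + c i * g 0)"
  proof (rule sum.cong)
    fix i assume "i \<in> {1..t}"
    then have "g i = blowD g i + g 0"
      using multiplicity_less[of i] by (auto simp: blowD_def)
    then show "c i * g i = c i * blowD g i + c i * g 0"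
      by (simp add: algebra_simps)
  qed simp
  also have "\<dots> = tail_weight g t c + tail_len t c * g 0"
    by (simp add: sum.distrib tail_weight_def tail_len_def sum_distrib_right)
  finally show ?thesis
    by (simp add: atMost_eq_insert_0 tlen_eq algebra_simps)
qed

lemma g_ge_1: "i \<le> t \<Longrightarrow> 1 \<le> g i"
  using multiplicity_pos multiplicity_less[of i] by (cases "i = 0") auto

lemma finite_sfact: "finite (sfact g t n)"
  unfolding sfact_def by (rule finite_weighted_tuples) (rule g_ge_1)

lemma blowD_ge_1: "i \<le> t \<Longrightarrow> 1 \<le> blowD g i"
  using multiplicity_pos multiplicity_less[of i] by (auto simp: blowD_def)

lemma finite_Pset: "finite (Pset g t b)"
  unfolding Pset_def by (rule finite_weighted_tuples) (rule blowD_ge_1)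

lemma tlen_le_of_Pset: "x \<in> Pset g t b \<Longrightarrow> tlen t x \<le> b"
  using tlen_le_weighted_sum[of t "blowD g" x] blowD_ge_1 by (simp add: Pset_def)

lemma mem_S_iff: "n \<in> S \<longleftrightarrow> sfact g t n \<noteq> {}"
proof
  assume "n \<in> S"
  then obtain c where "n = (\<Sum>i\<le>t. c i * g i)"
    using S_eq by auto
  then have "(\<lambda>i. if i \<le> t then c i else 0) \<in> sfact g t n"
    by (simp add: sfact_def tuples_def)
  then show "sfact g t n \<noteq> {}"
    by blast
qed (auto simp: S_eq sfact_def)

lemma ord_ge: "c \<in> sfact g t n \<Longrightarrow> tlen t c \<le> ord g t n"
  unfolding ord_def by (simp add: finite_sfact)

lemma ord_attained:
  assumes "n \<in> S"
  obtains c where "c \<in> sfact g t n" "tlen t c = ord g t n"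
  using Max_in[of "tlen t ` sfact g t n"] finite_sfact assms
  unfolding ord_def mem_S_iff by fastforce

lemma minord_le: "x \<in> Pset g t b \<Longrightarrow> minord g t b \<le> tlen t x"
  unfolding minord_def by (simp add: finite_Pset)

lemma minord_attained:
  assumes "Pset g t b \<noteq> {}"
  obtains x where "x \<in> Pset g t b" "tlen t x = minord g t b"
  using Min_in[of "tlen t ` Pset g t b"] finite_Pset assms
  unfolding minord_def by fastforce

lemma lift_to_sfact:
  assumes "x \<in> tuples t" "tail_len t x \<le> M"
  shows "x(0 := M - tail_len t x) \<in> sfact g t (M * g 0 + tail_weight g t x)"
    and "tlen t (x(0 := M - tail_len t x)) = M"
  using assms by (simp_all add: tlen_eq sfact_def sum_g_eq)

lemma adj_eq_tail_weight:
  assumes "c \<in> sfact g t n" "tlen t c = ord g t n"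
  shows "adj g t n = tail_weight g t c"
  using assms unfolding adj_def by (auto simp: sfact_def sum_g_eq)

lemma adj_ord_decomp:
  assumes "n \<in> S"
  shows "n = adj g t n + ord g t n * g 0"
proof -
  obtain c where c: "c \<in> sfact g t n" "tlen t c = ord g t n"
    using ord_attained[OF assms] .
  then have "n = ord g t n * g 0 + tail_weight g t c"
    by (simp add: sfact_def sum_g_eq)
  then show ?thesis
    using adj_eq_tail_weight[OF c] by simp
qed

lemma adj_mod:
  assumes "n \<in> S"
  shows "adj g t n mod g 0 = n mod g 0"
proof -
  have "adj g t n mod g 0 = (adj g t n + ord g t n * g 0) mod g 0"
    by simp
  then show ?thesis
    unfolding adj_ord_decomp[OF assms, symmetric] .
qed

lemma proj_max_sfact:
  assumes "c \<in> sfact g t n" "tlen t c = ord g t n"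
  shows "c(0 := 0) \<in> Pset g t (adj g t n)" and "tlen t (c(0 := 0)) \<le> ord g t n"
  using assms adj_eq_tail_weight[OF assms]
  by (simp_all add: Pset_def sfact_def sum_blowD_eq tlen_eq)

lemma minord_adj_le_ord:
  assumes "n \<in> S"
  shows "Pset g t (adj g t n) \<noteq> {}" and "minord g t (adj g t n) \<le> ord g t n"
proof -
  obtain c where "c \<in> sfact g t n" "tlen t c = ord g t n"
    using ord_attained[OF assms] .
  from proj_max_sfact[OF this] show "Pset g t (adj g t n) \<noteq> {}" "minord g t (adj g t n) \<le> ord g t n"
    using minord_le order_trans by blast+
qed

text \<open>Padding: reset the e-coordinate of y so that its length becomes M + y 0.\<close>
lemma ord_ge_of_Pset:
  assumes "y \<in> Pset g t b" "tlen t y \<le> M + y 0"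
  shows "b + M * g 0 \<in> S" and "M + y 0 \<le> ord g t (b + M * g 0)"
proof -
  have "y \<in> tuples t" "tail_len t y \<le> M + y 0"
    using assms by (auto simp: Pset_def tlen_eq)
  moreover have "(M + y 0) * g 0 + tail_weight g t y = b + M * g 0"
    using assms(1) by (simp add: Pset_def sum_blowD_eq algebra_simps)
  ultimately have "y(0 := M + y 0 - tail_len t y) \<in> sfact g t (b + M * g 0)"
    and "tlen t (y(0 := M + y 0 - tail_len t y)) = M + y 0"
    using lift_to_sfact by metis+
  then show "b + M * g 0 \<in> S" "M + y 0 \<le> ord g t (b + M * g 0)"
    unfolding mem_S_iff by (auto dest: ord_ge)
qed

lemma mem_ord_adj_add_mult:
  assumes "s \<in> S"
  shows "s + k * g 0 \<in> S" and "ord g t s + k \<le> ord g t (s + k * g 0)"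
    and "adj g t (s + k * g 0) \<le> adj g t s"
proof -
  obtain c where c: "c \<in> sfact g t s" "tlen t c = ord g t s"
    using ord_attained[OF assms] .
  note y = proj_max_sfact[OF c]
  have decomp: "s = adj g t s + ord g t s * g 0"
    by (rule adj_ord_decomp[OF assms])
  then have eq: "adj g t s + (ord g t s + k) * g 0 = s + k * g 0"
    unfolding add_mult_distrib by linarith
  from ord_ge_of_Pset[OF y(1), of "ord g t s + k"] y(2)
  show mem: "s + k * g 0 \<in> S" and ord: "ord g t s + k \<le> ord g t (s + k * g 0)"
    unfolding eq by auto
  have "(ord g t s + k) * g 0 \<le> ord g t (s + k * g 0) * g 0"
    using ord by (rule mult_right_mono) simp
  then show "adj g t (s + k * g 0) \<le> adj g t s"
    using decomp adj_ord_decomp[OF mem] unfolding add_mult_distrib by linarith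
qed

lemma adj_antimono_residue:
  assumes "s \<in> S" "s \<le> s'" "s' mod g 0 = s mod g 0"
  shows "s' \<in> S" and "adj g t s' \<le> adj g t s"
proof -
  obtain k where "s' = s + g 0 * k"
    using mod_eq_nat1E[OF assms(3,2)] .
  then have s': "s' = s + k * g 0"
    by (simp add: mult.commute)
  show "s' \<in> S" "adj g t s' \<le> adj g t s"
    unfolding s' using mem_ord_adj_add_mult[OF assms(1)] by simp_all
qed

lemma finite_adj_Sres: "finite (adj g t ` Sres S g i)"
proof (cases "Sres S g i = {}")
  case False
  define m where "m = (LEAST s. s \<in> Sres S g i)"
  have m: "m \<in> Sres S g i"
    using False unfolding m_def by (metis LeastI ex_in_conv)
  have "adj g t s \<le> adj g t m" if s: "s \<in> Sres S g i" for s
  proof -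
    have "m \<le> s"
      unfolding m_def using s by (rule Least_le)
    then show ?thesis
      using adj_antimono_residue(2)[of m s] m s by (simp add: Sres_def)
  qed
  then have "adj g t ` Sres S g i \<subseteq> {..adj g t m}"
    by auto
  then show ?thesis
    using finite_subset by blast
qed simp

lemma short_Pset_first_zero:
  assumes "n \<in> S" "x \<in> short_Pset g t n"
  shows "x 0 = 0"
proof -
  have "x \<in> Pset g t (adj g t n)" "tlen t x \<le> ord g t n + x 0"
    using assms(2) by (auto simp: short_Pset_def)
  from ord_ge_of_Pset(2)[OF this] show ?thesis
    unfolding adj_ord_decomp[OF assms(1), symmetric] by simp
qed

lemma finite_short_Pset: "finite (short_Pset g t n)"
  unfolding short_Pset_def using finite_Pset by simp

lemma dmax_eq_card_short_Pset:
  assumes "n \<in> S"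
  shows "dmax g t n = card (short_Pset g t n)"
proof -
  define M where "M = {c \<in> sfact g t n. tlen t c = ord g t n}"
  let ?lift = "\<lambda>x. x(0 := ord g t n - tail_len t x)"
  have "bij_betw (\<lambda>c. c(0 := 0)) M (short_Pset g t n)"
  proof (rule bij_betw_byWitness[where f' = ?lift])
    show "\<forall>c\<in>M. ?lift (c(0 := 0)) = c"
      by (auto simp: M_def tlen_eq fun_eq_iff)
    show "\<forall>x\<in>short_Pset g t n. (?lift x)(0 := 0) = x"
      using short_Pset_first_zero[OF assms] by (auto simp: fun_eq_iff)
    show "(\<lambda>c. c(0 := 0)) ` M \<subseteq> short_Pset g t n"
      using proj_max_sfact by (auto simp: M_def short_Pset_def)
    show "?lift ` short_Pset g t n \<subseteq> M"
    proof
      fix c assume "c \<in> ?lift ` short_Pset g t n"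
      then obtain x where x: "x \<in> short_Pset g t n" and c: "c = ?lift x"
        by blast
      have "x \<in> tuples t" "tail_len t x \<le> ord g t n"
        using x by (auto simp: short_Pset_def Pset_def tlen_eq)
      note lift = lift_to_sfact[OF this]
      have "ord g t n * g 0 + tail_weight g t x = n"
        using x short_Pset_first_zero[OF assms x] adj_ord_decomp[OF assms, symmetric]
        by (auto simp: short_Pset_def Pset_def sum_blowD_eq add.commute)
      then show "c \<in> M"
        using lift c by (simp add: M_def)
    qed
  qed
  then show ?thesis
    unfolding dmax_def M_def by (rule bij_betw_same_card)
qed

lemma Rset_Min:
  "u = Min (adj g t ` Sres S g i) \<Longrightarrow> Rset S g t i u = Pset g t u"
  by (simp add: Rset_def)

lemma Rset_not_Min:
  assumes "u \<noteq> Min (adj g t ` Sres S g i)"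
  defines "v \<equiv> Max {w \<in> adj g t ` Sres S g i. w < u}"
  shows "Rset S g t i u =
    {x \<in> Pset g t u. real (tlen t x) < real (minord g t v) - (real u - real v) / real (g 0)}"
  using assms by (simp add: Rset_def Let_def)

lemma short_Pset_subset_Rset:
  assumes "s \<in> S"
  shows "short_Pset g t s \<subseteq> Rset S g t (s mod g 0) (adj g t s)"
proof (cases "adj g t s = Min (adj g t ` Sres S g (s mod g 0))")
  case True
  then show ?thesis
    by (simp add: Rset_Min short_Pset_def)
next
  case False
  define A where "A = adj g t ` Sres S g (s mod g 0)"
  define u where "u = adj g t s"
  define L where "L = ord g t s"
  define v where "v = Max {w \<in> A. w < u}"
  have "u \<in> A"
    using assms by (simp add: A_def u_def Sres_def)
  then have "v \<in> A" "v < u"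
    using Max_less_in[OF finite_adj_Sres] False by (simp_all add: A_def u_def v_def)
  then obtain s' where s': "s' \<in> S" "s' mod g 0 = s mod g 0" "v = adj g t s'"
    by (auto simp: A_def Sres_def)
  then have "u mod g 0 = v mod g 0"
    using adj_mod assms by (simp add: u_def)
  then obtain \<delta> where \<delta>: "u = v + g 0 * \<delta>"
    using mod_eq_nat1E \<open>v < u\<close> by (metis less_imp_le)
  then have "1 \<le> \<delta>"
    using \<open>v < u\<close> by (cases \<delta>) auto
  obtain y where y: "y \<in> Pset g t v" "tlen t y = minord g t v"
    using minord_attained minord_adj_le_ord(1)[OF s'(1)] s'(3) by metis
  have key: "tlen t x + \<delta> < minord g t v" if x: "x \<in> short_Pset g t s" for x
  proof (rule ccontr)
    assume "\<not> ?thesis"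
    then have "tlen t y \<le> (L + \<delta>) + y 0"
      using x y(2) by (simp add: short_Pset_def L_def)
    from ord_ge_of_Pset(2)[OF y(1) this] have "L + \<delta> + y 0 \<le> ord g t (v + (L + \<delta>) * g 0)" .
    also have "v + (L + \<delta>) * g 0 = s"
      using \<delta> adj_ord_decomp[OF assms] by (simp add: u_def L_def algebra_simps)
    finally show False
      using \<open>1 \<le> \<delta>\<close> by (simp add: L_def)
  qed
  have gap: "(real u - real v) / real (g 0) = real \<delta>"
    using \<delta> multiplicity_pos by (simp add: field_simps)
  show ?thesis
  proof
    fix x assume x: "x \<in> short_Pset g t s"
    have "real (tlen t x) < real (minord g t v) - (real u - real v) / real (g 0)"
      using key[OF x] unfolding gap by linarith
    moreover have "x \<in> Pset g t u"
      using x by (simp add: short_Pset_def u_def)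
    ultimately show "x \<in> Rset S g t (s mod g 0) (adj g t s)"
      unfolding Rset_not_Min[OF False] u_def v_def A_def by simp
  qed
qed

lemma adj_step_to_pred:
  assumes "u \<in> adj g t ` Sres S g i" "u \<noteq> Min (adj g t ` Sres S g i)"
  obtains n where "n \<in> Sres S g i" "adj g t n = u"
    and "adj g t (n + g 0) = Max {w \<in> adj g t ` Sres S g i. w < u}"
proof -
  define A where "A = adj g t ` Sres S g i"
  define v where "v = Max {w \<in> A. w < u}"
  have "v \<in> A" "v < u"
    using Max_less_in[OF finite_adj_Sres] assms by (simp_all add: A_def v_def)
  then obtain s' where s': "s' \<in> Sres S g i" "adj g t s' = v"
    by (auto simp: A_def)
  define B where "B = {s \<in> Sres S g i. adj g t s = u}"
  have below_s': "s < s'" if "s \<in> B" for s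
  proof (rule ccontr)
    assume "\<not> s < s'"
    then have "adj g t s \<le> v"
      using adj_antimono_residue(2)[of s' s] s' that by (auto simp: Sres_def B_def)
    then show False
      using that \<open>v < u\<close> by (simp add: B_def)
  qed
  then have "finite B"
    by (meson finite_nat_set_iff_bounded)
  moreover have "B \<noteq> {}"
    using assms(1) by (auto simp: B_def)
  ultimately have "Max B \<in> B"
    by (rule Max_in)
  define n where "n = Max B"
  have n: "n \<in> Sres S g i" "adj g t n = u"
    using \<open>Max B \<in> B\<close> by (simp_all add: n_def B_def)
  have "n + g 0 \<in> S" "adj g t (n + g 0) \<le> u"
    using mem_ord_adj_add_mult[of n 1] n by (auto simp: Sres_def)
  then have succ: "n + g 0 \<in> Sres S g i"
    using n(1) by (simp add: Sres_def)
  have "n + g 0 \<notin> B"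
    using Max_ge[OF \<open>finite B\<close>, of "n + g 0"] multiplicity_pos by (auto simp: n_def)
  then have "adj g t (n + g 0) < u"
    using \<open>adj g t (n + g 0) \<le> u\<close> succ by (auto simp: B_def)
  then have "adj g t (n + g 0) \<le> v"
    unfolding v_def using succ finite_adj_Sres by (intro Max_ge) (auto simp: A_def)
  moreover have "v \<le> adj g t (n + g 0)"
  proof -
    have "n < s'" "s' mod g 0 = n mod g 0"
      using below_s' \<open>Max B \<in> B\<close> s'(1) n(1) by (auto simp: n_def Sres_def)
    then obtain k where "s' = n + g 0 * k" "k \<noteq> 0"
      by (metis mod_eq_nat1E less_imp_le add_0_right mult_0_right less_irrefl)
    then have "n + g 0 \<le> s'"
      by (simp add: Suc_le_eq)
    moreover have "s' mod g 0 = (n + g 0) mod g 0"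
      using s'(1) succ by (simp add: Sres_def)
    ultimately have "adj g t s' \<le> adj g t (n + g 0)"
      by (rule adj_antimono_residue(2)[OF \<open>n + g 0 \<in> S\<close>])
    then show ?thesis
      using s'(2) by simp
  qed
  ultimately show ?thesis
    using that n by (simp add: A_def v_def)
qed

lemma Rset_subset_Pset: "Rset S g t i u \<subseteq> Pset g t u"
  by (auto simp: Rset_def Let_def)

lemma Rset_subset_short_Pset_Min:
  assumes "u \<in> adj g t ` Sres S g i" "u = Min (adj g t ` Sres S g i)"
  obtains n where "n \<in> S" "Rset S g t i u \<subseteq> short_Pset g t n"
proof -
  obtain s0 where s0: "s0 \<in> Sres S g i" "adj g t s0 = u"
    using assms(1) by blast
  define n where "n = s0 + u * g 0"
  have n: "n \<in> S" "ord g t s0 + u \<le> ord g t n" "adj g t n \<le> u"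
    using mem_ord_adj_add_mult[of s0 u] s0 by (auto simp: n_def Sres_def)
  have "n \<in> Sres S g i"
    using n(1) s0(1) by (simp add: n_def Sres_def)
  then have "u \<le> adj g t n"
    unfolding assms(2) using finite_adj_Sres by (intro Min_le) auto
  then have "adj g t n = u"
    using n(3) by simp
  have "Rset S g t i u \<subseteq> short_Pset g t n"
  proof
    fix x assume "x \<in> Rset S g t i u"
    then have "x \<in> Pset g t u"
      by (simp add: Rset_Min[OF assms(2)])
    moreover from this have "tlen t x \<le> ord g t n"
      using tlen_le_of_Pset n(2) by fastforce
    ultimately show "x \<in> short_Pset g t n"
      using \<open>adj g t n = u\<close> by (simp add: short_Pset_def)
  qed
  with n(1) show ?thesis
    using that by blast
qed

lemma Rset_subset_short_Pset_not_Min: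
  assumes "u \<in> adj g t ` Sres S g i" "u \<noteq> Min (adj g t ` Sres S g i)"
  obtains n where "n \<in> S" "Rset S g t i u \<subseteq> short_Pset g t n"
proof -
  define v where "v = Max {w \<in> adj g t ` Sres S g i. w < u}"
  obtain n where n: "n \<in> Sres S g i" "adj g t n = u" "adj g t (n + g 0) = v"
    using adj_step_to_pred[OF assms] unfolding v_def by metis
  then have "n \<in> S" "n + g 0 \<in> S"
    using mem_ord_adj_add_mult[of n 1] by (auto simp: Sres_def)
  define L where "L = ord g t n"
  define L' where "L' = ord g t (n + g 0)"
  have "real n = real u + real L * real (g 0)" "real n + real (g 0) = real v + real L' * real (g 0)"
    using adj_ord_decomp[OF \<open>n \<in> S\<close>] adj_ord_decomp[OF \<open>n + g 0 \<in> S\<close>] n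
    unfolding L_def L'_def by (metis of_nat_add of_nat_mult)+
  then have gap: "(real u - real v) / real (g 0) = real L' - real L - 1"
    using multiplicity_pos by (simp add: field_simps)
  have "minord g t v \<le> L'"
    using minord_adj_le_ord(2)[OF \<open>n + g 0 \<in> S\<close>] n(3) by (simp add: L'_def)
  have "Rset S g t i u \<subseteq> short_Pset g t n"
  proof
    fix x assume x: "x \<in> Rset S g t i u"
    then have "real (tlen t x) < real (minord g t v) - (real u - real v) / real (g 0)"
      by (simp add: Rset_not_Min[OF assms(2)] v_def)
    then have "tlen t x \<le> L"
      unfolding gap using \<open>minord g t v \<le> L'\<close> by linarith
    moreover have "x \<in> Pset g t u"
      using x by (simp add: Rset_not_Min[OF assms(2)])
    ultimately show "x \<in> short_Pset g t n"
      using n(2) by (simp add: short_Pset_def L_def)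
  qed
  with \<open>n \<in> S\<close> show ?thesis
    using that by blast
qed

lemma card_Rset_le_dmax:
  assumes "u \<in> adj g t ` Sres S g i"
  shows "\<exists>n\<in>S. card (Rset S g t i u) \<le> dmax g t n"
proof -
  obtain n where "n \<in> S" "Rset S g t i u \<subseteq> short_Pset g t n"
    using Rset_subset_short_Pset_Min Rset_subset_short_Pset_not_Min assms by metis
  then show ?thesis
    using card_mono[OF finite_short_Pset] dmax_eq_card_short_Pset by metis
qed

lemma dmax_le_card_Rset:
  assumes "s \<in> S"
  shows "dmax g t s \<le> card (Rset S g t (s mod g 0) (adj g t s))"
proof -
  have "finite (Rset S g t (s mod g 0) (adj g t s))"
    using finite_subset[OF Rset_subset_Pset finite_Pset] .
  then show ?thesis
    using card_mono short_Pset_subset_Rset[OF assms] dmax_eq_card_short_Pset[OF assms] by metis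
qed

lemma dmaxS_eq_Max_card_Rset:
  "dmaxS S g t = Max {card (Rset S g t i u) | i u. i < g 0 \<and> u \<in> adj g t ` Sres S g i}"
  (is "_ = Max ?T")
proof -
  have "?T = (\<lambda>(i, u). card (Rset S g t i u)) ` (SIGMA i:{..<g 0}. adj g t ` Sres S g i)"
    by auto
  then have "finite ?T"
    using finite_adj_Sres by simp
  have "0 \<in> S"
    unfolding S_eq by (auto intro: exI[of _ "\<lambda>_. 0"])
  then have "card (Rset S g t 0 (adj g t 0)) \<in> ?T"
    using multiplicity_pos by (force simp: Sres_def)
  show ?thesis
    unfolding dmaxS_def
  proof (rule Max_eq_Max_if_cofinal)
    show "finite ?T" "dmax g t ` S \<noteq> {}" "?T \<noteq> {}"
      using \<open>finite ?T\<close> \<open>0 \<in> S\<close> \<open>card (Rset S g t 0 (adj g t 0)) \<in> ?T\<close> by auto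
  next
    fix d assume "d \<in> dmax g t ` S"
    then obtain s where "s \<in> S" "d = dmax g t s"
      by blast
    moreover have "card (Rset S g t (s mod g 0) (adj g t s)) \<in> ?T"
      using \<open>s \<in> S\<close> multiplicity_pos by (force simp: Sres_def)
    ultimately show "\<exists>r\<in>?T. d \<le> r"
      using dmax_le_card_Rset by blast
  next
    fix r assume "r \<in> ?T"
    then show "\<exists>d\<in>dmax g t ` S. r \<le> d"
      using card_Rset_le_dmax by blast
  qed
qed

end

theorem corollary3p11:
  fixes S :: "nat set" and g :: "nat \<Rightarrow> nat" and t :: nat
  assumes "numerical_semigroup S"
    and "minimal_generators S g t"
  shows "dmaxS S g t =
    Max {card (Rset S g t i u) | i u. i < g 0 \<and> u \<in> adj g t ` Sres S g i}"
proof -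
  have mono: "strict_mono_on {..t} g"
    and S_eq: "S = {n. \<exists>c. n = (\<Sum>i\<le>t. c i * g i)}"
    and minimal: "\<forall>j\<le>t. g j \<notin> {n. \<exists>c. n = (\<Sum>i\<in>{..t} - {j}. c i * g i)}"
    using assms(2) unfolding minimal_generators_def by auto
  have "g 0 \<noteq> 0"
  proof
    assume "g 0 = 0"
    then have "g 0 \<in> {n. \<exists>c. n = (\<Sum>i\<in>{..t} - {0}. c i * g i)}"
      by (auto intro!: exI[of _ "\<lambda>_. 0"])
    then show False
      using minimal by auto
  qed
  moreover have "\<And>i. 1 \<le> i \<Longrightarrow> i \<le> t \<Longrightarrow> g 0 < g i"
    using mono by (auto intro: strict_mono_onD)
  ultimately interpret multiplicity_generated S g t
    using S_eq by unfold_locales simp_all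
  show ?thesis
    by (rule dmaxS_eq_Max_card_Rset)
qed

end
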